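(* Let $n\ge2$. The group $VSG_n$ has a presentation with generators $\{\mu_{i,i+1},\gamma_{i,i+1},v_i\mid 1\le i\le n-1\}$ (where $\mu_{i,i+1}=\sigma_iv_i$ and $\gamma_{i,i+1}=\tau_iv_i$) and defining relations: $v_i^2=1$; $v_iv_jv_i=v_jv_iv_j$ for $|i-j|=1$; $v_i\mu_{j,j+1}v_i=v_j\mu_{i,i+1}v_j$ for $|i-j|=1$; $v_i\gamma_{j,j+1}v_i=v_j\gamma_{i,i+1}v_j$ for $|i-j|=1$; $\mu_{j,j+1}(v_j\mu_{i,i+1}v_j)\mu_{i,i+1}=\mu_{i,i+1}(v_j\mu_{i,i+1}v_j)\mu_{j,j+1}$ for $|i-j|=1$; $\mu_{j,j+1}(v_j\mu_{i,i+1}v_j)\gamma_{i,i+1}=\gamma_{i,i+1}(v_j\mu_{i,i+1}v_j)\mu_{j,j+1}$ for $|i-j|=1$; $\mu_{i,i+1}v_i\gamma_{i,i+1}=\gamma_{i,i+1}v_i\mu_{i,i+1}$ for all $i$; $\alpha_i\beta_j=\beta_j\alpha_i$ for $|i-j|>1$, where $\alpha_i,\beta_i\in\{\mu_{i,i+1},\gamma_{i,i+1},v_i\}$.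
   Context: Let $n\ge 2$. The virtual singular braid group $VSG_n$ is the group generated by $\sigma_i,v_i,\tau_i$ ($1\le i\le n-1$) subject to: $v_i^2=1$; $\sigma_i\tau_i=\tau_i\sigma_i$; for $|i-j|=1$: $\sigma_i\sigma_j\sigma_i=\sigma_j\sigma_i\sigma_j$, $v_iv_jv_i=v_jv_iv_j$, $v_i\sigma_jv_i=v_j\sigma_iv_j$, $v_i\tau_jv_i=v_j\tau_iv_j$, $\sigma_i\sigma_j\tau_i=\tau_j\sigma_i\sigma_j$; and for $|i-j|>1$: $g_ih_j=h_jg_i$ for all $g_i,h_i\in\{\sigma_i,\tau_i,v_i\}$. The elementary fusing strings are $\mu_{i,i+1}:=\sigma_iv_i$, $\mu_{i,i+1}^{-1}=v_i\sigma_i^{-1}$, $\gamma_{i,i+1}:=\tau_iv_i$, $\bar\gamma_{i,i+1}:=v_i\tau_i^{-1}=\gamma_{i,i+1}^{-1}$. *)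

theory Defs
  imports Main
begin

text \<open>A word over a generator type is a list of letters (a, e), where e = True means
  the generator a and e = False means its inverse.\<close>

type_synonym 'g word = "('g \<times> bool) list"

definition word_over :: "'g set \<Rightarrow> 'g word \<Rightarrow> bool" where
  "word_over S w \<longleftrightarrow> fst ` set w \<subseteq> S"

definition inv_word :: "'g word \<Rightarrow> 'g word" where
  "inv_word w = rev (map (\<lambda>(a, e). (a, \<not> e)) w)"

text \<open>Equality in the group with presentation (S | R): the smallest congruence on words
  over S containing free cancellation and the defining relations R.\<close>

inductive pres_eq :: "'g set \<Rightarrow> ('g word \<times> 'g word) set \<Rightarrow> 'g word \<Rightarrow> 'g word \<Rightarrow> bool"
  for S R where
  refl: "word_over S w \<Longrightarrow> pres_eq S R w w"
| sym: "pres_eq S R u w \<Longrightarrow> pres_eq S R w u"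
| trans: "pres_eq S R u v \<Longrightarrow> pres_eq S R v w \<Longrightarrow> pres_eq S R u w"
| cancel: "a \<in> S \<Longrightarrow> pres_eq S R [(a, e), (a, \<not> e)] []"
| rel: "(l, r) \<in> R \<Longrightarrow> pres_eq S R l r"
| append: "pres_eq S R u u' \<Longrightarrow> pres_eq S R v v' \<Longrightarrow> pres_eq S R (u @ v) (u' @ v')"

definition subst_word :: "('g \<Rightarrow> 'h word) \<Rightarrow> 'g word \<Rightarrow> 'h word" where
  "subst_word f w = concat (map (\<lambda>(a, e). if e then f a else inv_word (f a)) w)"

definition induces_iso ::
  "'g set \<Rightarrow> ('g word \<times> 'g word) set \<Rightarrow> 'h set \<Rightarrow> ('h word \<times> 'h word) set
   \<Rightarrow> ('g \<Rightarrow> 'h word) \<Rightarrow> bool" where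
  "induces_iso S1 R1 S2 R2 f \<longleftrightarrow>
     (\<forall>a\<in>S1. word_over S2 (f a)) \<and>
     (\<forall>w w'. pres_eq S1 R1 w w' \<longrightarrow> pres_eq S2 R2 (subst_word f w) (subst_word f w')) \<and>
     (\<forall>w w'. word_over S1 w \<and> word_over S1 w' \<and>
              pres_eq S2 R2 (subst_word f w) (subst_word f w') \<longrightarrow> pres_eq S1 R1 w w') \<and>
     (\<forall>u. word_over S2 u \<longrightarrow> (\<exists>w. word_over S1 w \<and> pres_eq S2 R2 (subst_word f w) u))"

datatype vsg_gen = Sig nat | Tau nat | Vg nat

definition gen :: "'g \<Rightarrow> 'g word" where "gen a = [(a, True)]"

definition vsg_gens :: "nat \<Rightarrow> vsg_gen set" where
  "vsg_gens n = {g i | g i. g \<in> {Sig, Tau, Vg} \<and> 1 \<le> i \<and> i < n}"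

definition adj :: "nat \<Rightarrow> nat \<Rightarrow> bool" where
  "adj i j \<longleftrightarrow> i = j + 1 \<or> j = i + 1"

definition far :: "nat \<Rightarrow> nat \<Rightarrow> bool" where
  "far i j \<longleftrightarrow> i + 1 < j \<or> j + 1 < i"

definition idx :: "nat \<Rightarrow> nat \<Rightarrow> bool" where
  "idx n i \<longleftrightarrow> 1 \<le> i \<and> i < n"

definition vsg_rels :: "nat \<Rightarrow> (vsg_gen word \<times> vsg_gen word) set" where
  "vsg_rels n =
     {(gen (Vg i) @ gen (Vg i), []) | i. idx n i}
   \<union> {(gen (Sig i) @ gen (Tau i), gen (Tau i) @ gen (Sig i)) | i. idx n i}
   \<union> {(gen (Sig i) @ gen (Sig j) @ gen (Sig i), gen (Sig j) @ gen (Sig i) @ gen (Sig j))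
       | i j. idx n i \<and> idx n j \<and> adj i j}
   \<union> {(gen (Vg i) @ gen (Vg j) @ gen (Vg i), gen (Vg j) @ gen (Vg i) @ gen (Vg j))
       | i j. idx n i \<and> idx n j \<and> adj i j}
   \<union> {(gen (Vg i) @ gen (Sig j) @ gen (Vg i), gen (Vg j) @ gen (Sig i) @ gen (Vg j))
       | i j. idx n i \<and> idx n j \<and> adj i j}
   \<union> {(gen (Vg i) @ gen (Tau j) @ gen (Vg i), gen (Vg j) @ gen (Tau i) @ gen (Vg j))
       | i j. idx n i \<and> idx n j \<and> adj i j}
   \<union> {(gen (Sig i) @ gen (Sig j) @ gen (Tau i), gen (Tau j) @ gen (Sig i) @ gen (Sig j))
       | i j. idx n i \<and> idx n j \<and> adj i j}
   \<union> {(gen (g i) @ gen (h j), gen (h j) @ gen (g i))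
       | g h i j. g \<in> {Sig, Tau, Vg} \<and> h \<in> {Sig, Tau, Vg} \<and> idx n i \<and> idx n j \<and> far i j}"

datatype fus_gen = Mu nat | Ga nat | Vf nat

definition fus_gens :: "nat \<Rightarrow> fus_gen set" where
  "fus_gens n = {g i | g i. g \<in> {Mu, Ga, Vf} \<and> 1 \<le> i \<and> i < n}"

definition fus_rels :: "nat \<Rightarrow> (fus_gen word \<times> fus_gen word) set" where
  "fus_rels n =
     {(gen (Vf i) @ gen (Vf i), []) | i. idx n i}
   \<union> {(gen (Vf i) @ gen (Vf j) @ gen (Vf i), gen (Vf j) @ gen (Vf i) @ gen (Vf j))
       | i j. idx n i \<and> idx n j \<and> adj i j}
   \<union> {(gen (Vf i) @ gen (Mu j) @ gen (Vf i), gen (Vf j) @ gen (Mu i) @ gen (Vf j))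
       | i j. idx n i \<and> idx n j \<and> adj i j}
   \<union> {(gen (Vf i) @ gen (Ga j) @ gen (Vf i), gen (Vf j) @ gen (Ga i) @ gen (Vf j))
       | i j. idx n i \<and> idx n j \<and> adj i j}
   \<union> {(gen (Mu j) @ (gen (Vf j) @ gen (Mu i) @ gen (Vf j)) @ gen (Mu i),
        gen (Mu i) @ (gen (Vf j) @ gen (Mu i) @ gen (Vf j)) @ gen (Mu j))
       | i j. idx n i \<and> idx n j \<and> adj i j}
   \<union> {(gen (Mu j) @ (gen (Vf j) @ gen (Mu i) @ gen (Vf j)) @ gen (Ga i),
        gen (Ga i) @ (gen (Vf j) @ gen (Mu i) @ gen (Vf j)) @ gen (Mu j))
       | i j. idx n i \<and> idx n j \<and> adj i j}
   \<union> {(gen (Mu i) @ gen (Vf i) @ gen (Ga i), gen (Ga i) @ gen (Vf i) @ gen (Mu i))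
       | i. idx n i}
   \<union> {(gen (g i) @ gen (h j), gen (h j) @ gen (g i))
       | g h i j. g \<in> {Mu, Ga, Vf} \<and> h \<in> {Mu, Ga, Vf} \<and> idx n i \<and> idx n j \<and> far i j}"

fun fus_to_vsg :: "fus_gen \<Rightarrow> vsg_gen word" where
  "fus_to_vsg (Mu i) = gen (Sig i) @ gen (Vg i)"
| "fus_to_vsg (Ga i) = gen (Tau i) @ gen (Vg i)"
| "fus_to_vsg (Vf i) = gen (Vg i)"

end

theory Submission imports Defs begin

text \<open>The substitutions mu_i := sigma_i v_i, gamma_i := tau_i v_i, v_i := v_i and
  sigma_i := mu_i v_i, tau_i := gamma_i v_i, v_i := v_i are mutually inverse modulo v_i^2 = 1.
  By a Tietze-type argument it therefore suffices that each of them sends the defining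
  relations of its source presentation to consequences of the relations of its target. Besides cancelling squares of the v_i, the
  one idea is that conjugation by v_i v_j turns a letter of index i into the corresponding
  letter of index j: v_i s_j v_i = v_j s_i v_j implies v_i v_j s_i v_i = s_j v_i v_j v_i.\<close>

section \<open>Words and presentations\<close>

lemma word_over_simps [simp]:
  "word_over S []"
  "word_over S (x # xs) \<longleftrightarrow> fst x \<in> S \<and> word_over S xs"
  "word_over S (xs @ ys) \<longleftrightarrow> word_over S xs \<and> word_over S ys"
  by (auto simp: word_over_def)

lemma word_over_take: "word_over S w \<Longrightarrow> word_over S (take k w)"
  and word_over_drop: "word_over S w \<Longrightarrow> word_over S (drop k w)"
  by (auto simp: word_over_def dest: in_set_takeD in_set_dropD)

lemma inv_word_simps [simp]:
  "inv_word [] = []"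
  "inv_word (x # xs) = inv_word xs @ [(fst x, \<not> snd x)]"
  "inv_word (xs @ ys) = inv_word ys @ inv_word xs"
  by (auto simp: inv_word_def split: prod.splits)

lemma inv_word_inv_word [simp]: "inv_word (inv_word w) = w"
  by (induction w) auto

lemma word_over_inv_word [simp]: "word_over S (inv_word w) \<longleftrightarrow> word_over S w"
  by (induction w) auto

definition relations_over :: "'g set \<Rightarrow> ('g word \<times> 'g word) set \<Rightarrow> bool" where
  "relations_over S R \<longleftrightarrow> (\<forall>(l, r) \<in> R. word_over S l \<and> word_over S r)"

declare pres_eq.trans [trans]

lemma pres_eq_right_inverse: "word_over S w \<Longrightarrow> pres_eq S R (w @ inv_word w) []"
proof (induction w)
  case Nil
  then show ?case by (auto intro: pres_eq.refl)
next
  case (Cons x w)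
  obtain a e where x: "x = (a, e)" by fastforce
  have "pres_eq S R ([(a, e)] @ (w @ inv_word w) @ [(a, \<not> e)]) ([(a, e)] @ [] @ [(a, \<not> e)])"
    using Cons x by (intro pres_eq.append pres_eq.refl) auto
  also have "pres_eq S R ... []"
    using Cons x by (auto intro: pres_eq.cancel)
  finally show ?case using x by simp
qed

lemma pres_eq_left_inverse: "word_over S w \<Longrightarrow> pres_eq S R (inv_word w @ w) []"
  using pres_eq_right_inverse[of S "inv_word w" R] by simp

lemma pres_eq_inv_word:
  assumes "relations_over S R" and "pres_eq S R u v"
  shows "pres_eq S R (inv_word u) (inv_word v)"
  using assms(2)
proof (induction rule: pres_eq.induct)
  case (refl w)
  then show ?case by (auto intro: pres_eq.refl)
next
  case (sym u w)
  then show ?case by (blast intro: pres_eq.sym)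
next
  case (trans u v w)
  then show ?case by (blast intro: pres_eq.trans)
next
  case (cancel a e)
  then show ?case using pres_eq.cancel[of a S R e] by simp
next
  case (rel l r)
  have l: "word_over S l" and r: "word_over S r"
    using rel assms(1) by (auto simp: relations_over_def)
  have "pres_eq S R (inv_word l) (inv_word l @ r @ inv_word r)"
    using pres_eq.append[OF pres_eq.refl pres_eq_right_inverse, of S "inv_word l" r R] l r
    by (auto intro: pres_eq.sym)
  also have "pres_eq S R ... (inv_word l @ l @ inv_word r)"
    using pres_eq.append[OF pres_eq.refl pres_eq.append[OF pres_eq.rel pres_eq.refl],
        of S "inv_word l" l r R "inv_word r"] rel l r
    by (auto intro: pres_eq.sym)
  also have "pres_eq S R ... (inv_word r)"
    using pres_eq.append[OF pres_eq_left_inverse pres_eq.refl, of S l "inv_word r" R] l r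
    by (auto intro: pres_eq.sym)
  finally show ?case .
next
  case (append u u' v v')
  then show ?case using pres_eq.append by fastforce
qed

lemma pres_eq_rewrite_at:
  assumes "pres_eq S R l r" and "word_over S w"
    and "take (length l) (drop k w) = l"
    and "w' = take k w @ r @ drop (k + length l) w"
  shows "pres_eq S R w w'"
proof -
  have "w = take k w @ l @ drop (k + length l) w"
    by (metis append_take_drop_id drop_drop add.commute assms(3))
  moreover have "pres_eq S R (take k w @ l @ drop (k + length l) w)
      (take k w @ r @ drop (k + length l) w)"
    using assms(1,2) by (intro pres_eq.append pres_eq.refl word_over_take word_over_drop)
  ultimately show ?thesis using assms(4) by simp
qed

lemma pres_eq_commute_Cons:
  assumes "\<And>b. b \<in> set v \<Longrightarrow> pres_eq S R [a, b] [b, a]"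
    and "fst a \<in> S" and "word_over S v"
  shows "pres_eq S R (a # v) (v @ [a])"
  using assms
proof (induction v)
  case Nil
  then show ?case by (auto intro: pres_eq.refl)
next
  case (Cons b v)
  have IH: "pres_eq S R (a # v) (v @ [a])"
    using Cons by simp
  have "pres_eq S R (a # b # v) (b # a # v)"
    using pres_eq.append[of S R "[a, b]" "[b, a]" v v] Cons.prems by (auto intro: pres_eq.refl)
  also have "pres_eq S R ... (b # v @ [a])"
    using pres_eq.append[OF pres_eq.refl[of S "[b]" R] IH] Cons.prems by simp
  finally show ?case by simp
qed

lemma pres_eq_commute_append:
  assumes "\<And>a b. a \<in> set u \<Longrightarrow> b \<in> set v \<Longrightarrow> pres_eq S R [a, b] [b, a]"
    and "word_over S u" and "word_over S v"
  shows "pres_eq S R (u @ v) (v @ u)"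
  using assms
proof (induction u)
  case Nil
  then show ?case by (auto intro: pres_eq.refl)
next
  case (Cons a u)
  have IH: "pres_eq S R (u @ v) (v @ u)"
    using Cons by simp
  have "pres_eq S R (a # u @ v) (a # v @ u)"
    using pres_eq.append[OF pres_eq.refl[of S "[a]" R] IH] Cons.prems by simp
  also have "pres_eq S R ... (v @ a # u)"
    using pres_eq.append[OF pres_eq_commute_Cons pres_eq.refl, of v S R a u] Cons.prems by auto
  finally show ?case by simp
qed

section \<open>Substitutions and a Tietze-type criterion\<close>

lemma subst_word_simps [simp]:
  "subst_word f [] = []"
  "subst_word f (x # xs) = (if snd x then f (fst x) else inv_word (f (fst x))) @ subst_word f xs"
  "subst_word f (xs @ ys) = subst_word f xs @ subst_word f ys"
  by (auto simp: subst_word_def split: prod.splits)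

lemma subst_word_inv_word [simp]: "subst_word f (inv_word w) = inv_word (subst_word f w)"
  by (induction w) auto

lemma subst_word_subst_word: "subst_word g (subst_word f w) = subst_word (\<lambda>a. subst_word g (f a)) w"
  by (induction w) auto

lemma word_over_subst_word:
  "(\<And>a. a \<in> S1 \<Longrightarrow> word_over S2 (f a)) \<Longrightarrow> word_over S1 w \<Longrightarrow>
    word_over S2 (subst_word f w)"
  by (induction w) auto

lemma pres_eq_subst_word:
  assumes over: "\<And>a. a \<in> S1 \<Longrightarrow> word_over S2 (f a)"
    and rels: "\<And>l r. (l, r) \<in> R1 \<Longrightarrow> pres_eq S2 R2 (subst_word f l) (subst_word f r)"
    and "pres_eq S1 R1 w w'"
  shows "pres_eq S2 R2 (subst_word f w) (subst_word f w')"
  using assms(3)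
proof (induction rule: pres_eq.induct)
  case (refl w)
  then show ?case by (intro pres_eq.refl word_over_subst_word[OF over])
next
  case (sym u w)
  then show ?case by (blast intro: pres_eq.sym)
next
  case (trans u v w)
  then show ?case by (blast intro: pres_eq.trans)
next
  case (cancel a e)
  then show ?case by (simp add: over pres_eq_right_inverse pres_eq_left_inverse)
next
  case (rel l r)
  then show ?case by (rule rels)
next
  case (append u u' v v')
  then show ?case using pres_eq.append by fastforce
qed

lemma pres_eq_subst_word_self:
  assumes "relations_over S R"
    and h: "\<And>a. a \<in> S \<Longrightarrow> pres_eq S R (h a) [(a, True)]"
    and "word_over S w"
  shows "pres_eq S R (subst_word h w) w"
  using assms(3)
proof (induction w)
  case Nil
  then show ?case by (auto intro: pres_eq.refl)
next
  case (Cons x w)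
  obtain a e where x: "x = (a, e)" by fastforce
  have "pres_eq S R (if e then h a else inv_word (h a)) [(a, e)]"
    using h pres_eq_inv_word[OF assms(1) h] Cons x by auto
  from pres_eq.append[OF this Cons.IH] show ?case using Cons x by auto
qed

lemma induces_iso_if_inverse_substitution:
  assumes rels1: "relations_over S1 R1" and rels2: "relations_over S2 R2"
    and f_over: "\<And>a. a \<in> S1 \<Longrightarrow> word_over S2 (f a)"
    and g_over: "\<And>a. a \<in> S2 \<Longrightarrow> word_over S1 (g a)"
    and f_rels: "\<And>l r. (l, r) \<in> R1 \<Longrightarrow> pres_eq S2 R2 (subst_word f l) (subst_word f r)"
    and g_rels: "\<And>l r. (l, r) \<in> R2 \<Longrightarrow> pres_eq S1 R1 (subst_word g l) (subst_word g r)"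
    and g_f: "\<And>a. a \<in> S1 \<Longrightarrow> pres_eq S1 R1 (subst_word g (f a)) [(a, True)]"
    and f_g: "\<And>a. a \<in> S2 \<Longrightarrow> pres_eq S2 R2 (subst_word f (g a)) [(a, True)]"
  shows "induces_iso S1 R1 S2 R2 f"
  unfolding induces_iso_def
proof (intro conjI allI impI ballI)
  fix w w'
  assume "pres_eq S1 R1 w w'"
  with f_over f_rels show "pres_eq S2 R2 (subst_word f w) (subst_word f w')"
    by (rule pres_eq_subst_word)
next
  have retract: "pres_eq S1 R1 (subst_word g (subst_word f w)) w" if "word_over S1 w" for w
    unfolding subst_word_subst_word using rels1 g_f that by (rule pres_eq_subst_word_self)
  fix w w'
  assume *: "word_over S1 w \<and> word_over S1 w' \<and>
    pres_eq S2 R2 (subst_word f w) (subst_word f w')"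
  have "pres_eq S1 R1 w (subst_word g (subst_word f w))"
    using * retract by (blast intro: pres_eq.sym)
  also have "pres_eq S1 R1 ... (subst_word g (subst_word f w'))"
    using * by (blast intro: pres_eq_subst_word[OF g_over g_rels])
  also have "pres_eq S1 R1 ... w'"
    using * retract by blast
  finally show "pres_eq S1 R1 w w'" .
next
  fix u
  assume u: "word_over S2 u"
  show "\<exists>w. word_over S1 w \<and> pres_eq S2 R2 (subst_word f w) u"
  proof (intro exI conjI)
    show "word_over S1 (subst_word g u)"
      using g_over u by (rule word_over_subst_word)
    show "pres_eq S2 R2 (subst_word f (subst_word g u)) u"
      unfolding subst_word_subst_word using rels2 f_g u by (rule pres_eq_subst_word_self)
  qed
qed (rule f_over)

section \<open>Word identities from the relations\<close>

context
  fixes S :: "'g set" and R :: "('g word \<times> 'g word) set"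
begin

abbreviation pres_eq_in (infix "\<approx>" 50) where "u \<approx> v \<equiv> pres_eq S R u v"

lemma cancel_square_right:
  assumes letters: "word_over S [v, m]" and vv: "[v, v] \<approx> []"
  shows "[m, v, v] \<approx> [m]"
  by (rule pres_eq_rewrite_at[OF vv, where k=1]) (use letters in simp_all)

lemma v_conj_shift:
  assumes letters: "word_over S [vi, vj, si, sj]"
    and vvi: "[vi, vi] \<approx> []" and vvj: "[vj, vj] \<approx> []"
    and conj: "[vi, sj, vi] \<approx> [vj, si, vj]"
  shows "[vi, vj, si, vi] \<approx> [sj, vi, vj, vi]"
proof -
  have "[vi, vj, si, vi] \<approx> [vi, vj, si, vj, vj, vi]"
    by (rule pres_eq_rewrite_at[OF pres_eq.sym[OF vvj], where k=3]) (use letters in simp_all)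
  also have "... \<approx> [vi, vi, sj, vi, vj, vi]"
    by (rule pres_eq_rewrite_at[OF pres_eq.sym[OF conj], where k=1]) (use letters in simp_all)
  also have "... \<approx> [sj, vi, vj, vi]"
    by (rule pres_eq_rewrite_at[OF vvi, where k=0]) (use letters in simp_all)
  finally show ?thesis .
qed

lemma v_conj_shift_twice:
  assumes letters: "word_over S [vi, vj, si, sj]"
    and vvi: "[vi, vi] \<approx> []" and vvj: "[vj, vj] \<approx> []"
    and braid: "[vi, vj, vi] \<approx> [vj, vi, vj]" and conj: "[vi, sj, vi] \<approx> [vj, si, vj]"
  shows "[vi, vj, si, vi, vj, sj, vj] \<approx> [sj, si, vi, vj, vi]"
proof -
  have "[vi, vj, si, vi, vj, sj, vj] \<approx> [sj, vi, vj, vi, vj, sj, vj]"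
    by (rule pres_eq_rewrite_at[OF v_conj_shift[OF letters vvi vvj conj], where k=0])
      (use letters in simp_all)
  also have "... \<approx> [sj, vj, vi, vj, vj, sj, vj]"
    by (rule pres_eq_rewrite_at[OF braid, where k=1]) (use letters in simp_all)
  also have "... \<approx> [sj, vj, vi, sj, vj]"
    by (rule pres_eq_rewrite_at[OF vvj, where k=3]) (use letters in simp_all)
  also have "... \<approx> [sj, si, vj, vi, vj]"
    by (rule pres_eq_rewrite_at[OF v_conj_shift[OF _ vvj vvi pres_eq.sym[OF conj]], where k=1])
      (use letters in simp_all)
  also have "... \<approx> [sj, si, vi, vj, vi]"
    by (rule pres_eq_rewrite_at[OF pres_eq.sym[OF braid], where k=2]) (use letters in simp_all)
  finally show ?thesis .
qed

lemma v_conj_fused: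
  assumes letters: "word_over S [vi, vj, si, sj]"
    and vvi: "[vi, vi] \<approx> []" and vvj: "[vj, vj] \<approx> []"
    and braid: "[vi, vj, vi] \<approx> [vj, vi, vj]" and conj: "[vi, sj, vi] \<approx> [vj, si, vj]"
  shows "[vi, sj, vj, vi] \<approx> [vj, si, vi, vj]"
proof -
  have "[vi, sj, vj, vi] \<approx> [vi, sj, vi, vi, vj, vi]"
    by (rule pres_eq_rewrite_at[OF pres_eq.sym[OF vvi], where k=2]) (use letters in simp_all)
  also have "... \<approx> [vj, si, vj, vi, vj, vi]"
    by (rule pres_eq_rewrite_at[OF conj, where k=0]) (use letters in simp_all)
  also have "... \<approx> [vj, si, vj, vj, vi, vj]"
    by (rule pres_eq_rewrite_at[OF braid, where k=3]) (use letters in simp_all)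
  also have "... \<approx> [vj, si, vi, vj]"
    by (rule pres_eq_rewrite_at[OF vvj, where k=2]) (use letters in simp_all)
  finally show ?thesis .
qed

lemma fus_mu_braid_from_vsg:
  assumes letters: "word_over S [vi, vj, si, sj]"
    and vvi: "[vi, vi] \<approx> []" and vvj: "[vj, vj] \<approx> []"
    and braid: "[vi, vj, vi] \<approx> [vj, vi, vj]" and conj: "[vi, sj, vi] \<approx> [vj, si, vj]"
    and braid_s: "[si, sj, si] \<approx> [sj, si, sj]"
  shows "[sj, vj, vj, si, vi, vj, si, vi] \<approx> [si, vi, vj, si, vi, vj, sj, vj]"
proof -
  have "[sj, vj, vj, si, vi, vj, si, vi] \<approx> [sj, si, vi, vj, si, vi]"
    by (rule pres_eq_rewrite_at[OF vvj, where k=1]) (use letters in simp_all)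
  also have "... \<approx> [sj, si, sj, vi, vj, vi]"
    by (rule pres_eq_rewrite_at[OF v_conj_shift[OF letters vvi vvj conj], where k=2])
      (use letters in simp_all)
  also have "... \<approx> [si, sj, si, vi, vj, vi]"
    by (rule pres_eq_rewrite_at[OF pres_eq.sym[OF braid_s], where k=0]) (use letters in simp_all)
  also have "... \<approx> [si, vi, vj, si, vi, vj, sj, vj]"
    by (rule pres_eq_rewrite_at[OF pres_eq.sym[OF v_conj_shift_twice[OF _ vvi vvj braid conj]], where k=1])
      (use letters in simp_all)
  finally show ?thesis .
qed

lemma fus_mu_gamma_braid_from_vsg:
  assumes letters: "word_over S [vi, vj, si, sj, ti, tj]"
    and vvi: "[vi, vi] \<approx> []" and vvj: "[vj, vj] \<approx> []"
    and braid: "[vi, vj, vi] \<approx> [vj, vi, vj]" and conj: "[vi, sj, vi] \<approx> [vj, si, vj]"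
    and conj_tau: "[vi, tj, vi] \<approx> [vj, ti, vj]" and mixed: "[sj, si, tj] \<approx> [ti, sj, si]"
  shows "[sj, vj, vj, si, vi, vj, ti, vi] \<approx> [ti, vi, vj, si, vi, vj, sj, vj]"
proof -
  have "[sj, vj, vj, si, vi, vj, ti, vi] \<approx> [sj, si, vi, vj, ti, vi]"
    by (rule pres_eq_rewrite_at[OF vvj, where k=1]) (use letters in simp_all)
  also have "... \<approx> [sj, si, tj, vi, vj, vi]"
    by (rule pres_eq_rewrite_at[OF v_conj_shift[OF _ vvi vvj conj_tau], where k=2])
      (use letters in simp_all)
  also have "... \<approx> [ti, sj, si, vi, vj, vi]"
    by (rule pres_eq_rewrite_at[OF mixed, where k=0]) (use letters in simp_all)
  also have "... \<approx> [ti, vi, vj, si, vi, vj, sj, vj]"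
    by (rule pres_eq_rewrite_at[OF pres_eq.sym[OF v_conj_shift_twice[OF _ vvi vvj braid conj]], where k=1])
      (use letters in simp_all)
  finally show ?thesis .
qed

lemma fus_mu_v_gamma_from_vsg:
  assumes letters: "word_over S [v, s, t]"
    and vv: "[v, v] \<approx> []" and comm: "[s, t] \<approx> [t, s]"
  shows "[s, v, v, t, v] \<approx> [t, v, v, s, v]"
proof -
  have "[s, v, v, t, v] \<approx> [s, t, v]"
    by (rule pres_eq_rewrite_at[OF vv, where k=1]) (use letters in simp_all)
  also have "... \<approx> [t, s, v]"
    by (rule pres_eq_rewrite_at[OF comm, where k=0]) (use letters in simp_all)
  also have "... \<approx> [t, v, v, s, v]"
    by (rule pres_eq_rewrite_at[OF pres_eq.sym[OF vv], where k=1]) (use letters in simp_all)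
  finally show ?thesis .
qed

lemma vsg_sigma_braid_from_fus:
  assumes letters: "word_over S [vi, vj, mi, mj]"
    and vvi: "[vi, vi] \<approx> []" and vvj: "[vj, vj] \<approx> []"
    and braid: "[vi, vj, vi] \<approx> [vj, vi, vj]" and conj_mu: "[vi, mj, vi] \<approx> [vj, mi, vj]"
    and braid_mu: "[mj, vj, mi, vj, mi] \<approx> [mi, vj, mi, vj, mj]"
  shows "[mi, vi, mj, vj, mi, vi] \<approx> [mj, vj, mi, vi, mj, vj]"
proof -
  have "[mi, vi, mj, vj, mi, vi] \<approx> [mi, vi, mj, vi, vi, vj, mi, vi]"
    by (rule pres_eq_rewrite_at[OF pres_eq.sym[OF vvi], where k=3]) (use letters in simp_all)
  also have "... \<approx> [mi, vj, mi, vj, vi, vj, mi, vi]"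
    by (rule pres_eq_rewrite_at[OF conj_mu, where k=1]) (use letters in simp_all)
  also have "... \<approx> [mi, vj, mi, vj, vi, vj, mi, vj, vj, vi]"
    by (rule pres_eq_rewrite_at[OF pres_eq.sym[OF vvj], where k=7]) (use letters in simp_all)
  also have "... \<approx> [mi, vj, mi, vj, vi, vi, mj, vi, vj, vi]"
    by (rule pres_eq_rewrite_at[OF pres_eq.sym[OF conj_mu], where k=5]) (use letters in simp_all)
  also have "... \<approx> [mi, vj, mi, vj, mj, vi, vj, vi]"
    by (rule pres_eq_rewrite_at[OF vvi, where k=4]) (use letters in simp_all)
  also have "... \<approx> [mj, vj, mi, vj, mi, vi, vj, vi]"
    by (rule pres_eq_rewrite_at[OF pres_eq.sym[OF braid_mu], where k=0]) (use letters in simp_all)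
  also have "... \<approx> [mj, vj, mi, vj, mi, vj, vi, vj]"
    by (rule pres_eq_rewrite_at[OF braid, where k=5]) (use letters in simp_all)
  also have "... \<approx> [mj, vj, mi, vi, mj, vi, vi, vj]"
    by (rule pres_eq_rewrite_at[OF pres_eq.sym[OF conj_mu], where k=3]) (use letters in simp_all)
  also have "... \<approx> [mj, vj, mi, vi, mj, vj]"
    by (rule pres_eq_rewrite_at[OF vvi, where k=5]) (use letters in simp_all)
  finally show ?thesis .
qed

lemma vsg_sigma_tau_braid_from_fus:
  assumes letters: "word_over S [vi, vj, mi, mj, gi, gj]"
    and vvi: "[vi, vi] \<approx> []" and vvj: "[vj, vj] \<approx> []"
    and braid: "[vi, vj, vi] \<approx> [vj, vi, vj]" and conj_mu: "[vi, mj, vi] \<approx> [vj, mi, vj]"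
    and conj_gamma: "[vi, gj, vi] \<approx> [vj, gi, vj]"
    and mixed_mu: "[mi, vi, mj, vi, gj] \<approx> [gj, vi, mj, vi, mi]"
  shows "[mi, vi, mj, vj, gi, vi] \<approx> [gj, vj, mi, vi, mj, vj]"
proof -
  have "[mi, vi, mj, vj, gi, vi] \<approx> [mi, vi, mj, vj, gi, vj, vj, vi]"
    by (rule pres_eq_rewrite_at[OF pres_eq.sym[OF vvj], where k=5]) (use letters in simp_all)
  also have "... \<approx> [mi, vi, mj, vi, gj, vi, vj, vi]"
    by (rule pres_eq_rewrite_at[OF pres_eq.sym[OF conj_gamma], where k=3]) (use letters in simp_all)
  also have "... \<approx> [mi, vi, mj, vi, gj, vj, vi, vj]"
    by (rule pres_eq_rewrite_at[OF braid, where k=5]) (use letters in simp_all)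
  also have "... \<approx> [gj, vi, mj, vi, mi, vj, vi, vj]"
    by (rule pres_eq_rewrite_at[OF mixed_mu, where k=0]) (use letters in simp_all)
  also have "... \<approx> [gj, vi, mj, vi, vj, vj, mi, vj, vi, vj]"
    by (rule pres_eq_rewrite_at[OF pres_eq.sym[OF vvj], where k=4]) (use letters in simp_all)
  also have "... \<approx> [gj, vi, mj, vi, vj, vi, mj, vi, vi, vj]"
    by (rule pres_eq_rewrite_at[OF pres_eq.sym[OF conj_mu], where k=5]) (use letters in simp_all)
  also have "... \<approx> [gj, vi, mj, vi, vj, vi, mj, vj]"
    by (rule pres_eq_rewrite_at[OF vvi, where k=7]) (use letters in simp_all)
  also have "... \<approx> [gj, vj, mi, vj, vj, vi, mj, vj]"
    by (rule pres_eq_rewrite_at[OF conj_mu, where k=1]) (use letters in simp_all)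
  also have "... \<approx> [gj, vj, mi, vi, mj, vj]"
    by (rule pres_eq_rewrite_at[OF vvj, where k=3]) (use letters in simp_all)
  finally show ?thesis .
qed

lemma vsg_sigma_tau_comm_from_fus:
  assumes letters: "word_over S [v, m, g]" and mixed: "[m, v, g] \<approx> [g, v, m]"
  shows "[m, v, g, v] \<approx> [g, v, m, v]"
  by (rule pres_eq_rewrite_at[OF mixed, where k=0]) (use letters in simp_all)

end

section \<open>The two presentations of the virtual singular braid group\<close>

lemma mem_vsg_gens [simp]:
  "Sig i \<in> vsg_gens n \<longleftrightarrow> idx n i" "Tau i \<in> vsg_gens n \<longleftrightarrow> idx n i"
  "Vg i \<in> vsg_gens n \<longleftrightarrow> idx n i"
  by (auto simp: vsg_gens_def idx_def)

lemma mem_fus_gens [simp]: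
  "Mu i \<in> fus_gens n \<longleftrightarrow> idx n i" "Ga i \<in> fus_gens n \<longleftrightarrow> idx n i"
  "Vf i \<in> fus_gens n \<longleftrightarrow> idx n i"
  by (auto simp: fus_gens_def idx_def)

lemma relations_over_vsg_rels: "relations_over (vsg_gens n) (vsg_rels n)"
  unfolding relations_over_def vsg_rels_def by (auto simp: gen_def)

lemma relations_over_fus_rels: "relations_over (fus_gens n) (fus_rels n)"
  unfolding relations_over_def fus_rels_def by (auto simp: gen_def)

context
  fixes n i j :: nat
  assumes i: "idx n i" and j: "idx n j"
begin

lemma vsg_v_square: "pres_eq (vsg_gens n) (vsg_rels n) [(Vg i, True), (Vg i, True)] []"
  by (rule pres_eq.rel) (auto simp: vsg_rels_def gen_def i)

lemma vsg_sigma_tau_comm: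
  "pres_eq (vsg_gens n) (vsg_rels n) [(Sig i, True), (Tau i, True)] [(Tau i, True), (Sig i, True)]"
  by (rule pres_eq.rel) (auto simp: vsg_rels_def gen_def i)

lemma vsg_sigma_braid: "adj i j \<Longrightarrow> pres_eq (vsg_gens n) (vsg_rels n)
    [(Sig i, True), (Sig j, True), (Sig i, True)] [(Sig j, True), (Sig i, True), (Sig j, True)]"
  by (rule pres_eq.rel) (auto simp: vsg_rels_def gen_def i j)

lemma vsg_v_braid: "adj i j \<Longrightarrow> pres_eq (vsg_gens n) (vsg_rels n)
    [(Vg i, True), (Vg j, True), (Vg i, True)] [(Vg j, True), (Vg i, True), (Vg j, True)]"
  by (rule pres_eq.rel) (auto simp: vsg_rels_def gen_def i j)

lemma vsg_v_sigma_conj: "adj i j \<Longrightarrow> pres_eq (vsg_gens n) (vsg_rels n)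
    [(Vg i, True), (Sig j, True), (Vg i, True)] [(Vg j, True), (Sig i, True), (Vg j, True)]"
  by (rule pres_eq.rel) (auto simp: vsg_rels_def gen_def i j)

lemma vsg_v_tau_conj: "adj i j \<Longrightarrow> pres_eq (vsg_gens n) (vsg_rels n)
    [(Vg i, True), (Tau j, True), (Vg i, True)] [(Vg j, True), (Tau i, True), (Vg j, True)]"
  by (rule pres_eq.rel) (auto simp: vsg_rels_def gen_def i j)

lemma vsg_sigma_tau_braid: "adj i j \<Longrightarrow> pres_eq (vsg_gens n) (vsg_rels n)
    [(Sig i, True), (Sig j, True), (Tau i, True)] [(Tau j, True), (Sig i, True), (Sig j, True)]"
  by (rule pres_eq.rel) (auto simp: vsg_rels_def gen_def i j)

lemma vsg_far_comm:
  assumes "far i j" and "x \<in> {Sig, Tau, Vg}" and "y \<in> {Sig, Tau, Vg}"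
  shows "pres_eq (vsg_gens n) (vsg_rels n) [(x i, True), (y j, True)] [(y j, True), (x i, True)]"
proof (rule pres_eq.rel)
  show "([(x i, True), (y j, True)], [(y j, True), (x i, True)]) \<in> vsg_rels n"
    unfolding vsg_rels_def gen_def append.simps using assms i j by blast
qed

lemma fus_v_square: "pres_eq (fus_gens n) (fus_rels n) [(Vf i, True), (Vf i, True)] []"
  by (rule pres_eq.rel) (auto simp: fus_rels_def gen_def i)

lemma fus_v_braid: "adj i j \<Longrightarrow> pres_eq (fus_gens n) (fus_rels n)
    [(Vf i, True), (Vf j, True), (Vf i, True)] [(Vf j, True), (Vf i, True), (Vf j, True)]"
  by (rule pres_eq.rel) (auto simp: fus_rels_def gen_def i j)

lemma fus_v_mu_conj: "adj i j \<Longrightarrow> pres_eq (fus_gens n) (fus_rels n)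
    [(Vf i, True), (Mu j, True), (Vf i, True)] [(Vf j, True), (Mu i, True), (Vf j, True)]"
  by (rule pres_eq.rel) (auto simp: fus_rels_def gen_def i j)

lemma fus_v_gamma_conj: "adj i j \<Longrightarrow> pres_eq (fus_gens n) (fus_rels n)
    [(Vf i, True), (Ga j, True), (Vf i, True)] [(Vf j, True), (Ga i, True), (Vf j, True)]"
  by (rule pres_eq.rel) (auto simp: fus_rels_def gen_def i j)

lemma fus_mu_braid: "adj i j \<Longrightarrow> pres_eq (fus_gens n) (fus_rels n)
    [(Mu j, True), (Vf j, True), (Mu i, True), (Vf j, True), (Mu i, True)]
    [(Mu i, True), (Vf j, True), (Mu i, True), (Vf j, True), (Mu j, True)]"
  by (rule pres_eq.rel) (auto simp: fus_rels_def gen_def i j)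

lemma fus_mu_gamma_braid: "adj i j \<Longrightarrow> pres_eq (fus_gens n) (fus_rels n)
    [(Mu j, True), (Vf j, True), (Mu i, True), (Vf j, True), (Ga i, True)]
    [(Ga i, True), (Vf j, True), (Mu i, True), (Vf j, True), (Mu j, True)]"
  by (rule pres_eq.rel) (auto simp: fus_rels_def gen_def i j)

lemma fus_mu_v_gamma: "pres_eq (fus_gens n) (fus_rels n)
    [(Mu i, True), (Vf i, True), (Ga i, True)] [(Ga i, True), (Vf i, True), (Mu i, True)]"
  by (rule pres_eq.rel) (auto simp: fus_rels_def gen_def i)

lemma fus_far_comm:
  assumes "far i j" and "x \<in> {Mu, Ga, Vf}" and "y \<in> {Mu, Ga, Vf}"
  shows "pres_eq (fus_gens n) (fus_rels n) [(x i, True), (y j, True)] [(y j, True), (x i, True)]"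
proof (rule pres_eq.rel)
  show "([(x i, True), (y j, True)], [(y j, True), (x i, True)]) \<in> fus_rels n"
    unfolding fus_rels_def gen_def append.simps using assms i j by blast
qed

end

fun vsg_to_fus :: "vsg_gen \<Rightarrow> fus_gen word" where
  "vsg_to_fus (Sig i) = gen (Mu i) @ gen (Vf i)"
| "vsg_to_fus (Tau i) = gen (Ga i) @ gen (Vf i)"
| "vsg_to_fus (Vg i) = gen (Vf i)"

lemma word_over_fus_to_vsg: "a \<in> fus_gens n \<Longrightarrow> word_over (vsg_gens n) (fus_to_vsg a)"
  by (cases a) (auto simp: gen_def)

lemma word_over_vsg_to_fus: "a \<in> vsg_gens n \<Longrightarrow> word_over (fus_gens n) (vsg_to_fus a)"
  by (cases a) (auto simp: gen_def)

lemma vsg_to_fus_fus_to_vsg: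
  "a \<in> fus_gens n \<Longrightarrow>
    pres_eq (fus_gens n) (fus_rels n) (subst_word vsg_to_fus (fus_to_vsg a)) [(a, True)]"
  by (cases a) (auto simp: gen_def intro!: cancel_square_right fus_v_square pres_eq.refl)

lemma fus_to_vsg_vsg_to_fus:
  "a \<in> vsg_gens n \<Longrightarrow>
    pres_eq (vsg_gens n) (vsg_rels n) (subst_word fus_to_vsg (vsg_to_fus a)) [(a, True)]"
  by (cases a) (auto simp: gen_def intro!: cancel_square_right vsg_v_square pres_eq.refl)

lemma fus_to_vsg_far_comm:
  assumes "far i j" and "idx n i" and "idx n j" and "g \<in> {Mu, Ga, Vf}" and "h \<in> {Mu, Ga, Vf}"
  shows "pres_eq (vsg_gens n) (vsg_rels n)
    (fus_to_vsg (g i) @ fus_to_vsg (h j)) (fus_to_vsg (h j) @ fus_to_vsg (g i))"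
  using assms by (intro pres_eq_commute_append) (auto simp: gen_def intro!: vsg_far_comm)

lemma vsg_to_fus_far_comm:
  assumes "far i j" and "idx n i" and "idx n j" and "g \<in> {Sig, Tau, Vg}" and "h \<in> {Sig, Tau, Vg}"
  shows "pres_eq (fus_gens n) (fus_rels n)
    (vsg_to_fus (g i) @ vsg_to_fus (h j)) (vsg_to_fus (h j) @ vsg_to_fus (g i))"
  using assms by (intro pres_eq_commute_append) (auto simp: gen_def intro!: fus_far_comm)

lemma fus_rels_to_vsg:
  "(l, r) \<in> fus_rels n \<Longrightarrow>
    pres_eq (vsg_gens n) (vsg_rels n) (subst_word fus_to_vsg l) (subst_word fus_to_vsg r)"
  unfolding fus_rels_def
  apply (elim UnE)
  subgoal by (clarsimp simp: gen_def) (rule vsg_v_square)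
  subgoal by (clarsimp simp: gen_def) (rule vsg_v_braid)
  subgoal by (clarsimp simp: gen_def)
      (rule v_conj_fused; auto intro: vsg_v_square vsg_v_braid vsg_v_sigma_conj)
  subgoal by (clarsimp simp: gen_def)
      (rule v_conj_fused; auto intro: vsg_v_square vsg_v_braid vsg_v_tau_conj)
  subgoal by (clarsimp simp: gen_def)
      (rule fus_mu_braid_from_vsg;
        auto intro: vsg_v_square vsg_v_braid vsg_v_sigma_conj vsg_sigma_braid)
  subgoal by (clarsimp simp: gen_def)
      (rule fus_mu_gamma_braid_from_vsg;
        auto intro: vsg_v_square vsg_v_braid vsg_v_sigma_conj vsg_v_tau_conj vsg_sigma_tau_braid
          simp: adj_def)
  subgoal by (clarsimp simp: gen_def)
      (rule fus_mu_v_gamma_from_vsg; auto intro: vsg_v_square vsg_sigma_tau_comm)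
  subgoal by clarsimp (use fus_to_vsg_far_comm in \<open>simp add: gen_def\<close>)
  done

lemma vsg_rels_to_fus:
  "(l, r) \<in> vsg_rels n \<Longrightarrow>
    pres_eq (fus_gens n) (fus_rels n) (subst_word vsg_to_fus l) (subst_word vsg_to_fus r)"
  unfolding vsg_rels_def
  apply (elim UnE)
  subgoal by (clarsimp simp: gen_def) (rule fus_v_square)
  subgoal by (clarsimp simp: gen_def) (rule vsg_sigma_tau_comm_from_fus; auto intro: fus_mu_v_gamma)
  subgoal by (clarsimp simp: gen_def)
      (rule vsg_sigma_braid_from_fus; auto intro: fus_v_square fus_v_braid fus_v_mu_conj fus_mu_braid)
  subgoal by (clarsimp simp: gen_def) (rule fus_v_braid)
  subgoal by (clarsimp simp: gen_def)
      (rule v_conj_fused; auto intro: fus_v_square fus_v_braid fus_v_mu_conj)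
  subgoal by (clarsimp simp: gen_def)
      (rule v_conj_fused; auto intro: fus_v_square fus_v_braid fus_v_gamma_conj)
  subgoal by (clarsimp simp: gen_def)
      (rule vsg_sigma_tau_braid_from_fus;
        auto intro: fus_v_square fus_v_braid fus_v_mu_conj fus_v_gamma_conj fus_mu_gamma_braid
          simp: adj_def)
  subgoal by clarsimp (use vsg_to_fus_far_comm in \<open>simp add: gen_def\<close>)
  done

theorem mainTheorem2:
  fixes n :: nat
  assumes "n \<ge> 2"
  shows "induces_iso (fus_gens n) (fus_rels n) (vsg_gens n) (vsg_rels n) fus_to_vsg"
  by (rule induces_iso_if_inverse_substitution[where g = vsg_to_fus])
    (auto intro: relations_over_fus_rels relations_over_vsg_rels word_over_fus_to_vsg
      word_over_vsg_to_fus fus_rels_to_vsg vsg_rels_to_fus vsg_to_fus_fus_to_vsg fus_to_vsg_vsg_to_fus)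

end
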